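(* Let $G$ be a finite non-abelian group with $G/Z(G)\cong\mathbb{Z}_p\times\mathbb{Z}_p$ for a prime $p$. Then $\Gamma_G$ is neither hyperenergetic, L-hyperenergetic nor Q-hyperenergetic.
   Context: The NCCC-graph $\Gamma_G$ of a finite non-abelian group $G$ with center $Z(G)$ has vertex set $\{x^G: x\in G\setminus Z(G)\}$ ($x^G$ the conjugacy class of $x$), distinct vertices $x^G,y^G$ adjacent iff $x'y'\neq y'x'$ for all $x'\in x^G,y'\in y^G$. For a simple graph $\mathcal G$ with adjacency matrix $A$, degree matrix $D$, $L=D-A$, $Q=D+A$: $E(\mathcal G)=\sum|\lambda|$ over eigenvalues of $A$; with $\Delta=2|E(\mathcal G)|/|V(\mathcal G)|$, $LE(\mathcal G)=\sum|\beta-\Delta|$ over eigenvalues $\beta$ of $L$, $SE(\mathcal G)=\sum|\gamma-\Delta|$ over eigenvalues $\gamma$ of $Q$ (with multiplicity). For $N=|V(\mathcal G)|$ and $K_N$ the complete graph, $E(K_N)=LE(K_N)=SE(K_N)=2(N-1)$. $\mathcal G$ is hyperenergetic if $E(\mathcal G)>E(K_N)$, L-hyperenergetic if $LE(\mathcal G)>LE(K_N)$, Q-hyperenergetic if $SE(\mathcal G)>SE(K_N)$. *)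

theory Defs
  imports "HOL-Algebra.Elementary_Groups" "HOL-Algebra.Coset" "Jordan_Normal_Form.Char_Poly"
    "HOL-Computational_Algebra.Polynomial"
begin

definition grp_center :: "('a, 'b) monoid_scheme \<Rightarrow> 'a set" where
  "grp_center G = {z \<in> carrier G. \<forall>x \<in> carrier G. z \<otimes>\<^bsub>G\<^esub> x = x \<otimes>\<^bsub>G\<^esub> z}"

definition conj_class :: "('a, 'b) monoid_scheme \<Rightarrow> 'a \<Rightarrow> 'a set" where
  "conj_class G x = {g \<otimes>\<^bsub>G\<^esub> x \<otimes>\<^bsub>G\<^esub> inv\<^bsub>G\<^esub> g | g. g \<in> carrier G}"

definition nccc_vertices :: "('a, 'b) monoid_scheme \<Rightarrow> 'a set set" where
  "nccc_vertices G = {conj_class G x | x. x \<in> carrier G - grp_center G}"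

definition nccc_adj :: "('a, 'b) monoid_scheme \<Rightarrow> 'a set \<Rightarrow> 'a set \<Rightarrow> bool" where
  "nccc_adj G X Y \<longleftrightarrow> X \<in> nccc_vertices G \<and> Y \<in> nccc_vertices G \<and> X \<noteq> Y \<and>
     (\<forall>x' \<in> X. \<forall>y' \<in> Y. x' \<otimes>\<^bsub>G\<^esub> y' \<noteq> y' \<otimes>\<^bsub>G\<^esub> x')"

text \<open>A simple graph is given by a finite vertex set V and a symmetric irreflexive
  relation E. Matrices are built w.r.t. a fixed enumeration of V (the spectra do not
  depend on this choice).\<close>

definition vert_enum :: "'v set \<Rightarrow> nat \<Rightarrow> 'v" where
  "vert_enum V = (SOME f. bij_betw f {0..<card V} V)"

definition graph_degree :: "'v set \<Rightarrow> ('v \<Rightarrow> 'v \<Rightarrow> bool) \<Rightarrow> 'v \<Rightarrow> nat" where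
  "graph_degree V E v = card {w \<in> V. E v w}"

definition adjacency_matrix :: "'v set \<Rightarrow> ('v \<Rightarrow> 'v \<Rightarrow> bool) \<Rightarrow> real mat" where
  "adjacency_matrix V E = mat (card V) (card V)
     (\<lambda>(i, j). if E (vert_enum V i) (vert_enum V j) then 1 else 0)"

definition degree_matrix :: "'v set \<Rightarrow> ('v \<Rightarrow> 'v \<Rightarrow> bool) \<Rightarrow> real mat" where
  "degree_matrix V E = mat (card V) (card V)
     (\<lambda>(i, j). if i = j then real (graph_degree V E (vert_enum V i)) else 0)"

definition laplacian_matrix :: "'v set \<Rightarrow> ('v \<Rightarrow> 'v \<Rightarrow> bool) \<Rightarrow> real mat" where
  "laplacian_matrix V E = degree_matrix V E - adjacency_matrix V E"

definition signless_laplacian_matrix :: "'v set \<Rightarrow> ('v \<Rightarrow> 'v \<Rightarrow> bool) \<Rightarrow> real mat" where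
  "signless_laplacian_matrix V E = degree_matrix V E + adjacency_matrix V E"

definition eigenvalues_mset :: "real mat \<Rightarrow> complex multiset" where
  "eigenvalues_mset M = proots (char_poly (map_mat complex_of_real M))"

definition num_edges :: "'v set \<Rightarrow> ('v \<Rightarrow> 'v \<Rightarrow> bool) \<Rightarrow> nat" where
  "num_edges V E = card {{v, w} | v w. v \<in> V \<and> w \<in> V \<and> E v w}"

definition avg_degree :: "'v set \<Rightarrow> ('v \<Rightarrow> 'v \<Rightarrow> bool) \<Rightarrow> real" where
  "avg_degree V E = 2 * real (num_edges V E) / real (card V)"

definition graph_energy :: "'v set \<Rightarrow> ('v \<Rightarrow> 'v \<Rightarrow> bool) \<Rightarrow> real" where
  "graph_energy V E = (\<Sum>\<mu>\<in>#eigenvalues_mset (adjacency_matrix V E). cmod \<mu>)"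

definition laplacian_energy :: "'v set \<Rightarrow> ('v \<Rightarrow> 'v \<Rightarrow> bool) \<Rightarrow> real" where
  "laplacian_energy V E = (\<Sum>\<beta>\<in>#eigenvalues_mset (laplacian_matrix V E).
      cmod (\<beta> - complex_of_real (avg_degree V E)))"

definition signless_laplacian_energy :: "'v set \<Rightarrow> ('v \<Rightarrow> 'v \<Rightarrow> bool) \<Rightarrow> real" where
  "signless_laplacian_energy V E = (\<Sum>\<gamma>\<in>#eigenvalues_mset (signless_laplacian_matrix V E).
      cmod (\<gamma> - complex_of_real (avg_degree V E)))"

text \<open>E(K_N) = LE(K_N) = SE(K_N) = 2(N-1).\<close>
definition hyperenergetic :: "'v set \<Rightarrow> ('v \<Rightarrow> 'v \<Rightarrow> bool) \<Rightarrow> bool" where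
  "hyperenergetic V E \<longleftrightarrow> graph_energy V E > 2 * (real (card V) - 1)"

definition L_hyperenergetic :: "'v set \<Rightarrow> ('v \<Rightarrow> 'v \<Rightarrow> bool) \<Rightarrow> bool" where
  "L_hyperenergetic V E \<longleftrightarrow> laplacian_energy V E > 2 * (real (card V) - 1)"

definition Q_hyperenergetic :: "'v set \<Rightarrow> ('v \<Rightarrow> 'v \<Rightarrow> bool) \<Rightarrow> bool" where
  "Q_hyperenergetic V E \<longleftrightarrow> signless_laplacian_energy V E > 2 * (real (card V) - 1)"

end

theory Submission
  imports Defs "HOL-Algebra.Group_Action" "Jordan_Normal_Form.Schur_Decomposition"
begin

(* Write Z for the centre of G, so that |G| = p^2 |Z| and G/Z is abelian. For a non-central x
   the centralizer C(x) lies strictly between Z and G, so Lagrange's theorem gives |C(x)| = p |Z|;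
   applied to C(x) \<inter> C(y) it shows that commuting non-central elements have the same
   centralizer. Conjugates of x have the form x z with z in Z, hence share its centralizer, and
   the NCCC-graph is the complete multipartite graph whose parts collect the classes with a common
   centralizer, all parts having the same size m.

   A complete multipartite graph with n vertices and all parts of size m is (n - m)-regular, so
   L = (n - m) I - A and Q = (n - m) I + A, and all three energies equal the adjacency energy.
   The eigenvalues of A lie in {n - m, 0, -m}; since their sum tr A = 0 and the sum of their
   squares tr A^2 = n (n - m), the eigenvalue n - m is simple, and the energy is 2 (n - m),
   which is at most 2 (n - 1). *)

section \<open>Traces and spectra of complex matrices\<close>

definition mat_trace :: "'a::comm_ring_1 mat \<Rightarrow> 'a" where
  "mat_trace M = (\<Sum>i<dim_row M. M $$ (i, i))"

lemma mat_trace_mult_comm: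
  fixes A B :: "'a::comm_ring_1 mat"
  assumes A: "A \<in> carrier_mat n k" and B: "B \<in> carrier_mat k n"
  shows "mat_trace (A * B) = mat_trace (B * A)"
proof -
  have "mat_trace (A * B) = (\<Sum>i<n. \<Sum>l<k. A $$ (i, l) * B $$ (l, i))"
    using A B by (auto simp: mat_trace_def scalar_prod_def lessThan_atLeast0 intro!: sum.cong)
  also have "\<dots> = (\<Sum>l<k. \<Sum>i<n. B $$ (l, i) * A $$ (i, l))"
    by (subst sum.swap) (simp add: mult.commute)
  also have "\<dots> = mat_trace (B * A)"
    using A B by (auto simp: mat_trace_def scalar_prod_def lessThan_atLeast0 intro!: sum.cong)
  finally show ?thesis .
qed

lemma mat_trace_similar:
  fixes A B :: "'a::comm_ring_1 mat"
  assumes "similar_mat_wit A B P Q"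
  shows "mat_trace A = mat_trace B"
proof -
  define n where "n = dim_row A"
  note wit = similar_mat_witD[OF n_def assms]
  have "mat_trace A = mat_trace (P * (B * Q))"
    using wit by (simp add: assoc_mult_mat[of _ n n _ n _ n])
  also have "\<dots> = mat_trace (B * Q * P)"
    using wit by (subst mat_trace_mult_comm[of _ n n]) (auto simp: assoc_mult_mat[of _ n n _ n _ n])
  also have "\<dots> = mat_trace B"
    using wit by (simp add: assoc_mult_mat[of _ n n _ n _ n])
  finally show ?thesis .
qed

lemma upper_triangular_square_diag:
  fixes T :: "'a::comm_ring_1 mat"
  assumes T: "T \<in> carrier_mat n n" and ut: "upper_triangular T" and i: "i < n"
  shows "(T * T) $$ (i, i) = T $$ (i, i) * T $$ (i, i)"
proof -
  have "(T * T) $$ (i, i) = (\<Sum>l<n. T $$ (i, l) * T $$ (l, i))"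
    using T i by (auto simp: scalar_prod_def lessThan_atLeast0 intro!: sum.cong)
  also have "\<dots> = T $$ (i, i) * T $$ (i, i)"
    using T ut i by (subst sum.remove[of _ i]) (auto simp: upper_triangular_def intro!: sum.neutral,
      metis linorder_neqE_nat mult_zero_left mult_zero_right)
  finally show ?thesis .
qed

lemma proots_prod_linear_factors:
  "proots (\<Prod>a\<leftarrow>as. [:- a, 1:]) = mset (as :: 'a::idom list)"
proof (induction as)
  case (Cons a as)
  have "proots ([:- a, 1:] * (\<Prod>b\<leftarrow>as. [:- b, 1:])) = {#a#} + mset as"
    by (subst proots_mult) (auto simp: prod_list_zero_iff Cons.IH)
  then show ?case by simp
qed simp

lemma schur_triangular_eigenvalues:
  fixes A :: "complex mat"
  assumes A: "A \<in> carrier_mat n n"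
  obtains T P Q where "similar_mat_wit A T P Q" "T \<in> carrier_mat n n" "upper_triangular T"
    "proots (char_poly A) = mset (diag_mat T)"
proof -
  obtain as where cp: "char_poly A = (\<Prod>a\<leftarrow>as. [:- a, 1:])"
    using char_poly_factorized[OF A] by blast
  obtain T P Q where sd: "schur_decomposition A as = (T, P, Q)"
    by (cases "schur_decomposition A as") auto
  from schur_decomposition[OF A cp sd] have "similar_mat_wit A T P Q" "upper_triangular T"
    "diag_mat T = as" by auto
  with similar_mat_witD2[OF A] cp proots_prod_linear_factors show ?thesis
    using that by metis
qed

lemma sum_eigenvalues_eq_trace:
  fixes A :: "complex mat"
  assumes A: "A \<in> carrier_mat n n"
  shows "sum_mset (proots (char_poly A)) = mat_trace A"
proof -
  obtain T P Q where sw: "similar_mat_wit A T P Q" and T: "T \<in> carrier_mat n n"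
    and ev: "proots (char_poly A) = mset (diag_mat T)"
    using schur_triangular_eigenvalues[OF A] .
  have "sum_mset (proots (char_poly A)) = (\<Sum>i<n. T $$ (i, i))"
    using T by (simp add: ev diag_mat_def sum_unfold_sum_mset multiset.map_comp comp_def lessThan_atLeast0)
  also have "\<dots> = mat_trace A"
    using mat_trace_similar[OF sw] T by (simp add: mat_trace_def)
  finally show ?thesis .
qed

lemma sum_squared_eigenvalues_eq_trace:
  fixes A :: "complex mat"
  assumes A: "A \<in> carrier_mat n n"
  shows "(\<Sum>t\<in>#proots (char_poly A). t * t) = mat_trace (A * A)"
proof -
  obtain T P Q where sw: "similar_mat_wit A T P Q" and T: "T \<in> carrier_mat n n"
    and ut: "upper_triangular T" and ev: "proots (char_poly A) = mset (diag_mat T)"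
    using schur_triangular_eigenvalues[OF A] .
  have "similar_mat_wit (A ^\<^sub>m 2) (T ^\<^sub>m 2) P Q"
    by (rule similar_mat_wit_pow[OF sw])
  hence sw2: "similar_mat_wit (A * A) (T * T) P Q"
    by (simp add: numeral_2_eq_2)
  have "(\<Sum>t\<in>#proots (char_poly A). t * t) = (\<Sum>i<n. T $$ (i, i) * T $$ (i, i))"
    using T by (simp add: ev diag_mat_def sum_unfold_sum_mset multiset.map_comp comp_def lessThan_atLeast0)
  also have "\<dots> = mat_trace (A * A)"
    using mat_trace_similar[OF sw2] T upper_triangular_square_diag[OF T ut] by (simp add: mat_trace_def)
  finally show ?thesis .
qed

lemma similar_mat_wit_affine:
  fixes A B :: "'a::comm_ring_1 mat"
  assumes sw: "similar_mat_wit A B P Q" and A: "A \<in> carrier_mat n n"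
  shows "similar_mat_wit (c \<cdot>\<^sub>m 1\<^sub>m n + s \<cdot>\<^sub>m A) (c \<cdot>\<^sub>m 1\<^sub>m n + s \<cdot>\<^sub>m B) P Q"
proof -
  note wit = similar_mat_witD2[OF A sw]
  have "P * (c \<cdot>\<^sub>m 1\<^sub>m n + s \<cdot>\<^sub>m B) = c \<cdot>\<^sub>m P + s \<cdot>\<^sub>m (P * B)"
    using wit by (subst mult_add_distrib_mat[of _ n n]) (auto simp: mult_smult_distrib[of _ n n])
  hence "P * (c \<cdot>\<^sub>m 1\<^sub>m n + s \<cdot>\<^sub>m B) * Q = c \<cdot>\<^sub>m (P * Q) + s \<cdot>\<^sub>m (P * B * Q)"
    using wit by (simp add: add_mult_distrib_mat[of _ n n] mult_smult_assoc_mat[of _ n n])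
  with wit show ?thesis
    by (intro similar_mat_witI[of P Q n]) auto
qed

lemma proots_char_poly_affine:
  fixes A :: "complex mat"
  assumes A: "A \<in> carrier_mat n n"
  shows "proots (char_poly (c \<cdot>\<^sub>m 1\<^sub>m n + s \<cdot>\<^sub>m A))
    = image_mset (\<lambda>t. c + s * t) (proots (char_poly A))"
proof -
  obtain T P Q where sw: "similar_mat_wit A T P Q" and T: "T \<in> carrier_mat n n"
    and ut: "upper_triangular T" and ev: "proots (char_poly A) = mset (diag_mat T)"
    using schur_triangular_eigenvalues[OF A] .
  let ?T = "c \<cdot>\<^sub>m 1\<^sub>m n + s \<cdot>\<^sub>m T"
  have "char_poly (c \<cdot>\<^sub>m 1\<^sub>m n + s \<cdot>\<^sub>m A) = char_poly ?T"
    using similar_mat_wit_affine[OF sw A] by (intro char_poly_similar) (auto simp: similar_mat_def)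
  also have "\<dots> = (\<Prod>a\<leftarrow>diag_mat ?T. [:- a, 1:])"
    by (rule char_poly_upper_triangular) (use T ut in \<open>auto simp: upper_triangular_def\<close>)
  finally have "proots (char_poly (c \<cdot>\<^sub>m 1\<^sub>m n + s \<cdot>\<^sub>m A)) = mset (diag_mat ?T)"
    by (simp only: proots_prod_linear_factors)
  also have "diag_mat ?T = map (\<lambda>t. c + s * t) (diag_mat T)"
    using T by (auto simp: diag_mat_def)
  finally show ?thesis
    by (simp add: ev)
qed

section \<open>Complete multipartite graphs\<close>

definition complete_multipartite_mat :: "nat \<Rightarrow> (nat \<Rightarrow> 'c) \<Rightarrow> complex mat" where
  "complete_multipartite_mat n g = mat n n (\<lambda>(i, j). if g i \<noteq> g j then 1 else 0)"

lemma complete_multipartite_mat_mult_vec: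
  assumes v: "v \<in> carrier_vec n" and i: "i < n"
  shows "(complete_multipartite_mat n g *\<^sub>v v) $ i
    = (\<Sum>j<n. v $ j) - (\<Sum>j\<in>{j \<in> {..<n}. g j = g i}. v $ j)"
proof -
  have "(\<Sum>j<n. v $ j) = (\<Sum>j<n. (if g i \<noteq> g j then 1 else 0) * v $ j + (if g j = g i then v $ j else 0))"
    by (rule sum.cong) auto
  also have "\<dots> = (\<Sum>j<n. (if g i \<noteq> g j then 1 else 0) * v $ j) + (\<Sum>j\<in>{j \<in> {..<n}. g j = g i}. v $ j)"
    unfolding sum.distrib by (simp only: sum.inter_filter[OF finite_lessThan])
  also have "(\<Sum>j<n. (if g i \<noteq> g j then 1 else 0) * v $ j) = (complete_multipartite_mat n g *\<^sub>v v) $ i"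
    using i v by (simp add: complete_multipartite_mat_def scalar_prod_def lessThan_atLeast0)
  finally show ?thesis by (simp only: add_diff_cancel_right')
qed

lemma sum_sum_equal_parts:
  fixes f :: "nat \<Rightarrow> 'a::comm_semiring_1"
  assumes parts: "\<forall>i<n. card {j \<in> {..<n}. g j = g i} = m"
  shows "(\<Sum>i<n. \<Sum>j\<in>{j \<in> {..<n}. g j = g i}. f j) = of_nat m * (\<Sum>j<n. f j)"
proof -
  have "(\<Sum>i<n. \<Sum>j\<in>{j \<in> {..<n}. g j = g i}. f j) = (\<Sum>j<n. \<Sum>i\<in>{i \<in> {..<n}. g j = g i}. f j)"
    by (rule sum.swap_restrict) auto
  also have "\<dots> = (\<Sum>j<n. \<Sum>i\<in>{i \<in> {..<n}. g i = g j}. f j)"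
    by (intro sum.cong) auto
  also have "\<dots> = of_nat m * (\<Sum>j<n. f j)"
    using parts by (auto simp: sum_distrib_left intro!: sum.cong)
  finally show ?thesis .
qed

lemma complete_multipartite_eigenvector_row:
  assumes v: "v \<in> carrier_vec n" and Mv: "complete_multipartite_mat n g *\<^sub>v v = t \<cdot>\<^sub>v v"
    and i: "i < n"
  shows "(\<Sum>j<n. v $ j) - (\<Sum>j\<in>{j \<in> {..<n}. g j = g i}. v $ j) = t * v $ i"
proof -
  have "(\<Sum>j<n. v $ j) - (\<Sum>j\<in>{j \<in> {..<n}. g j = g i}. v $ j) = (complete_multipartite_mat n g *\<^sub>v v) $ i"
    by (rule complete_multipartite_mat_mult_vec[OF v i, symmetric])
  also have "\<dots> = t * v $ i"
    using Mv i v by simp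
  finally show ?thesis .
qed

lemma complete_multipartite_eigenvector_sum:
  assumes parts: "\<forall>i<n. card {j \<in> {..<n}. g j = g i} = m"
    and v: "v \<in> carrier_vec n" and Mv: "complete_multipartite_mat n g *\<^sub>v v = t \<cdot>\<^sub>v v"
  shows "(of_nat n - of_nat m - t) * (\<Sum>j<n. v $ j) = 0"
proof -
  let ?S = "\<Sum>j<n. v $ j" and ?b = "\<lambda>i. \<Sum>j\<in>{j \<in> {..<n}. g j = g i}. v $ j"
  have "(\<Sum>i<n. ?S - ?b i) = of_nat n * ?S - of_nat m * ?S"
    using sum_sum_equal_parts[OF parts] by (simp add: sum_subtractf)
  moreover have "(\<Sum>i<n. ?S - ?b i) = (\<Sum>i<n. t * v $ i)"
    using complete_multipartite_eigenvector_row[OF v Mv] by (intro sum.cong) auto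
  ultimately show ?thesis
    by (simp add: sum_distrib_left algebra_simps)
qed

lemma complete_multipartite_eigenvector_part_sum:
  assumes parts: "\<forall>i<n. card {j \<in> {..<n}. g j = g i} = m"
    and v: "v \<in> carrier_vec n" and Mv: "complete_multipartite_mat n g *\<^sub>v v = t \<cdot>\<^sub>v v"
    and i: "i < n"
  shows "(t + of_nat m) * (\<Sum>j\<in>{j \<in> {..<n}. g j = g i}. v $ j) = of_nat m * (\<Sum>j<n. v $ j)"
proof -
  define part where "part k = {j \<in> {..<n}. g j = g k}" for k
  let ?S = "\<Sum>j<n. v $ j" and ?b = "\<lambda>k. \<Sum>j\<in>part k. v $ j"
  have "?b k = ?b i" if "k \<in> part i" for k
    using that by (simp add: part_def)
  moreover have "card (part i) = m"
    using parts i by (simp add: part_def)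
  ultimately have "(\<Sum>k\<in>part i. ?S - ?b k) = of_nat m * ?S - of_nat m * ?b i"
    by (simp add: right_diff_distrib)
  moreover have "(\<Sum>k\<in>part i. ?S - ?b k) = (\<Sum>k\<in>part i. t * v $ k)"
  proof (rule sum.cong)
    fix k assume "k \<in> part i"
    then have "k < n" by (simp add: part_def)
    then show "?S - ?b k = t * v $ k"
      using complete_multipartite_eigenvector_row[OF v Mv] by (simp only: part_def)
  qed simp
  ultimately have "of_nat m * ?S - of_nat m * ?b i = t * ?b i"
    by (simp add: sum_distrib_left)
  then show ?thesis
    by (simp add: part_def algebra_simps)
qed

lemma eigenvalue_complete_multipartite_mat:
  assumes parts: "\<forall>i<n. card {j \<in> {..<n}. g j = g i} = m"
    and "eigenvalue (complete_multipartite_mat n g) t"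
  shows "t = of_nat n - of_nat m \<or> t = 0 \<or> t = - of_nat m"
proof -
  obtain v where "eigenvector (complete_multipartite_mat n g) v t"
    using assms(2) unfolding eigenvalue_def by blast
  then have v: "v \<in> carrier_vec n" "v \<noteq> 0\<^sub>v n"
    and Mv: "complete_multipartite_mat n g *\<^sub>v v = t \<cdot>\<^sub>v v"
    by (auto simp: eigenvector_def complete_multipartite_mat_def)
  obtain i where i: "i < n" "v $ i \<noteq> 0"
    using v by (metis carrier_vecD eq_vecI index_zero_vec(1) index_zero_vec(2))
  show ?thesis
  proof (cases "t = of_nat n - of_nat m \<or> t = - of_nat m")
    case False
    then have "(\<Sum>j<n. v $ j) = 0"
      using complete_multipartite_eigenvector_sum[OF parts v(1) Mv] by auto
    moreover have "t + of_nat m \<noteq> 0"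
      using False by (simp add: add_eq_0_iff2)
    ultimately have "(\<Sum>j\<in>{j \<in> {..<n}. g j = g i}. v $ j) = 0"
      using complete_multipartite_eigenvector_part_sum[OF parts v(1) Mv i(1)] by simp
    then show ?thesis
      using complete_multipartite_eigenvector_row[OF v(1) Mv i(1)] i(2)
        \<open>(\<Sum>j<n. v $ j) = 0\<close> by simp
  qed auto
qed

lemma mat_trace_complete_multipartite_mat: "mat_trace (complete_multipartite_mat n g) = 0"
  by (simp add: mat_trace_def complete_multipartite_mat_def)

lemma mat_trace_square_complete_multipartite_mat:
  fixes g :: "nat \<Rightarrow> 'c"
  assumes parts: "\<forall>i<n. card {j \<in> {..<n}. g j = g i} = m"
  shows "mat_trace (complete_multipartite_mat n g * complete_multipartite_mat n g)
    = of_nat n * (of_nat n - of_nat m)"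
proof -
  let ?M = "complete_multipartite_mat n g"
  have diag: "(?M * ?M) $$ (i, i) = of_nat n - of_nat m" if i: "i < n" for i
  proof -
    have "(?M * ?M) $$ (i, i) = (\<Sum>j<n. if g i \<noteq> g j then 1 else 0)"
      using i by (auto simp: complete_multipartite_mat_def scalar_prod_def lessThan_atLeast0
          intro!: sum.cong)
    also have "\<dots> = of_nat (card ({..<n} - {j \<in> {..<n}. g j = g i}))"
      by (simp add: sum.If_cases Int_def set_diff_eq, rule arg_cong[where f = card], auto)
    also have "\<dots> = of_nat n - of_nat m"
    proof -
      have "{j \<in> {..<n}. g j = g i} \<subseteq> {..<n}" by auto
      then have "m \<le> n"
        using parts i card_mono[OF finite_lessThan] by fastforce
      then show ?thesis
        using parts i by (subst card_Diff_subset) (auto simp: of_nat_diff)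
    qed
    finally show ?thesis .
  qed
  then show ?thesis
    by (simp add: mat_trace_def complete_multipartite_mat_def)
qed

lemma sum_mset_if_eq_count:
  fixes f :: "'a \<Rightarrow> 'b::comm_semiring_1"
  assumes "\<And>t. t \<in># M \<Longrightarrow> f t = (if t = e then c else 0)"
  shows "(\<Sum>t\<in>#M. f t) = of_nat (count M e) * c"
  using assms by (induction M) (auto simp: algebra_simps)

lemma energy_complete_multipartite_spectrum:
  fixes M :: "complex multiset" and n m :: nat
  assumes "m \<le> n"
    and vals: "\<forall>t\<in>#M. t = of_nat n - of_nat m \<or> t = 0 \<or> t = - of_nat m"
    and sum: "sum_mset M = 0"
    and sum_squares: "(\<Sum>t\<in>#M. t * t) = of_nat n * (of_nat n - of_nat m)"
  shows "(\<Sum>t\<in>#M. cmod t) = 2 * (real n - real m)"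
proof -
  define d where "d = real n - real m"
  define a where "a = count M (of_real d)"
  \<comment> \<open>Both trace identities are linear in a; together they force a = 1 unless n (n - m) = 0.\<close>
  have "d \<ge> 0" using \<open>m \<le> n\<close> by (simp add: d_def)
  have vals_d: "t = of_real d \<or> t = 0 \<or> t = - of_nat m" if "t \<in># M" for t
    using vals that by (simp add: d_def)
  have "complex_of_real (\<Sum>t\<in>#M. cmod t) + sum_mset M = (\<Sum>t\<in>#M. complex_of_real (cmod t) + t)"
    by (simp add: sum_mset.distrib of_real_hom.hom_sum_mset multiset.map_comp comp_def)
  also have "\<dots> = of_nat a * of_real (2 * d)"
    using vals_d \<open>d \<ge> 0\<close> unfolding a_def by (intro sum_mset_if_eq_count) force
  finally have "complex_of_real (\<Sum>t\<in>#M. cmod t) = complex_of_real (2 * d * a)"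
    using sum by (simp add: mult_ac)
  then have energy: "(\<Sum>t\<in>#M. cmod t) = 2 * d * a"
    by (simp only: of_real_eq_iff)
  have "(\<Sum>t\<in>#M. t * t) + of_nat m * sum_mset M = (\<Sum>t\<in>#M. t * t + of_nat m * t)"
    by (simp add: sum_mset.distrib sum_mset_distrib_left)
  also have "\<dots> = of_nat a * of_real (real n * d)"
    unfolding a_def
    by (intro sum_mset_if_eq_count) (use vals_d in \<open>fastforce simp: d_def ring_distribs\<close>)
  finally have "real n * d = real n * d * a"
    using sum sum_squares by (simp add: d_def flip: of_real_eq_iff)
  then have "d = 0 \<or> a = 1"
    using \<open>m \<le> n\<close> by (cases "n = 0") (auto simp: d_def)
  then show ?thesis
    using energy by (auto simp: d_def)
qed

lemma energy_complete_multipartite_mat: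
  fixes g :: "nat \<Rightarrow> 'c"
  assumes parts: "\<forall>i<n. card {j \<in> {..<n}. g j = g i} = m" and "m \<le> n"
  shows "(\<Sum>t\<in>#proots (char_poly (complete_multipartite_mat n g)). cmod t) = 2 * (real n - real m)"
proof (rule energy_complete_multipartite_spectrum[OF \<open>m \<le> n\<close>])
  let ?M = "complete_multipartite_mat n g"
  have M: "?M \<in> carrier_mat n n" by (simp add: complete_multipartite_mat_def)
  show "\<forall>t\<in>#proots (char_poly ?M). t = of_nat n - of_nat m \<or> t = 0 \<or> t = - of_nat m"
  proof
    fix t assume "t \<in># proots (char_poly ?M)"
    then have "poly (char_poly ?M) t = 0"
      by (cases "char_poly ?M = 0") auto
    then show "t = of_nat n - of_nat m \<or> t = 0 \<or> t = - of_nat m"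
      using eigenvalue_complete_multipartite_mat[OF parts] eigenvalue_root_char_poly[OF M] by blast
  qed
  show "sum_mset (proots (char_poly ?M)) = 0"
    using sum_eigenvalues_eq_trace[OF M] by (simp add: mat_trace_complete_multipartite_mat)
  show "(\<Sum>t\<in>#proots (char_poly ?M). t * t) = of_nat n * (of_nat n - of_nat m)"
    using sum_squared_eigenvalues_eq_trace[OF M] mat_trace_square_complete_multipartite_mat[OF parts]
    by simp
qed

lemma handshake_regular:
  fixes V :: "'v set"
  assumes "finite V" and sym: "\<forall>v\<in>V. \<forall>w\<in>V. E v w \<longrightarrow> E w v"
    and irrefl: "\<forall>v\<in>V. \<not> E v v" and deg: "\<forall>v\<in>V. graph_degree V E v = d"
  shows "2 * num_edges V E = card V * d"
proof -
  define arcs where "arcs = (SIGMA v:V. {w \<in> V. E v w})"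
  define edge where "edge = (\<lambda>(v::'v, w). {v, w})"
  have "finite arcs" unfolding arcs_def using \<open>finite V\<close> by auto
  have "card arcs = card V * d"
    unfolding arcs_def using \<open>finite V\<close> deg by (simp add: graph_degree_def)
  have edges: "{{v, w} | v w. v \<in> V \<and> w \<in> V \<and> E v w} = edge ` arcs"
    unfolding arcs_def edge_def by auto
  have "card arcs = (\<Sum>y\<in>edge ` arcs. card {x \<in> arcs. edge x = y})"
    using sum.image_gen[OF \<open>finite arcs\<close>, of "\<lambda>_. 1::nat" edge] by simp
  also have "\<dots> = (\<Sum>y\<in>edge ` arcs. 2)"
  proof (rule sum.cong[OF refl])
    fix y assume "y \<in> edge ` arcs"
    then obtain v w where "v \<in> V" "w \<in> V" "E v w" and y: "y = {v, w}"
      unfolding arcs_def edge_def by auto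
    moreover from this have "{x \<in> arcs. edge x = y} = {(v, w), (w, v)}" and "v \<noteq> w"
      using sym irrefl unfolding arcs_def edge_def by (auto simp: doubleton_eq_iff)
    ultimately show "card {x \<in> arcs. edge x = y} = 2" by simp
  qed
  finally show ?thesis
    using \<open>card arcs = card V * d\<close> by (simp add: num_edges_def edges)
qed

lemma avg_degree_regular:
  assumes "finite V" and "V \<noteq> {}" and "\<forall>v\<in>V. \<forall>w\<in>V. E v w \<longrightarrow> E w v"
    and "\<forall>v\<in>V. \<not> E v v" and "\<forall>v\<in>V. graph_degree V E v = d"
  shows "avg_degree V E = real d"
proof -
  have "2 * real (num_edges V E) = real (card V) * real d"
    using handshake_regular[OF assms(1,3-5)] by (metis of_nat_mult of_nat_numeral)
  moreover have "card V > 0"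
    using assms(1,2) by (simp add: card_gt_0_iff)
  ultimately show ?thesis
    by (simp add: avg_degree_def)
qed

lemma bij_betw_vert_enum:
  assumes "finite V"
  shows "bij_betw (vert_enum V) {..<card V} V"
  unfolding vert_enum_def lessThan_atLeast0
  by (rule someI_ex[OF ex_bij_betw_nat_finite[OF assms]])

lemma card_fibres_vert_enum:
  assumes "finite V" and parts: "\<forall>v\<in>V. card {w \<in> V. f w = f v} = m"
  shows "\<forall>i<card V. card {j \<in> {..<card V}. f (vert_enum V j) = f (vert_enum V i)} = m"
proof (intro allI impI)
  fix i assume i: "i < card V"
  let ?e = "vert_enum V" and ?F = "{j \<in> {..<card V}. f (vert_enum V j) = f (vert_enum V i)}"
  note bij = bij_betw_vert_enum[OF \<open>finite V\<close>]
  have "card ?F = card (?e ` ?F)"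
    using bij by (intro card_image[symmetric]) (auto simp: bij_betw_def intro: inj_on_subset)
  also have "?e ` ?F = {w \<in> V. f w = f (?e i)}"
    using bij by (auto simp: bij_betw_def)
  also have "card \<dots> = m"
    using parts bij i by (auto simp: bij_betw_def)
  finally show "card ?F = m" .
qed

lemma energies_complete_multipartite:
  fixes V :: "'v set" and f :: "'v \<Rightarrow> 'c"
  assumes "finite V" and "V \<noteq> {}"
    and parts: "\<forall>v\<in>V. card {w \<in> V. f w = f v} = m"
    and adj: "\<forall>v\<in>V. \<forall>w\<in>V. E v w \<longleftrightarrow> f v \<noteq> f w"
  shows "graph_energy V E = 2 * (real (card V) - real m)"
    and "laplacian_energy V E = 2 * (real (card V) - real m)"
    and "signless_laplacian_energy V E = 2 * (real (card V) - real m)"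
proof -
  define n where "n = card V"
  define g where "g i = f (vert_enum V i)" for i
  have eV: "vert_enum V i \<in> V" if "i < n" for i
    using bij_betw_vert_enum[OF \<open>finite V\<close>] that by (auto simp: bij_betw_def n_def)
  have parts_g: "\<forall>i<n. card {j \<in> {..<n}. g j = g i} = m"
    using card_fibres_vert_enum[OF \<open>finite V\<close> parts] by (simp add: n_def g_def)
  have "m \<le> n"
    using \<open>finite V\<close> \<open>V \<noteq> {}\<close> parts card_mono[OF \<open>finite V\<close>] by (force simp: n_def)
  have deg: "graph_degree V E v = n - m" if "v \<in> V" for v
  proof -
    have "{w \<in> V. E v w} = V - {w \<in> V. f w = f v}" using adj that by auto
    then show ?thesis
      using parts that \<open>finite V\<close> by (simp add: graph_degree_def n_def card_Diff_subset)
  qed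
  have "avg_degree V E = real (n - m)"
    by (rule avg_degree_regular) (use \<open>finite V\<close> \<open>V \<noteq> {}\<close> adj deg in auto)
  then have avg: "avg_degree V E = real n - real m"
    using \<open>m \<le> n\<close> by (simp add: of_nat_diff)
  let ?A = "complete_multipartite_mat n g"
  have A: "?A \<in> carrier_mat n n" by (simp add: complete_multipartite_mat_def)
  have spectrum: "(\<Sum>\<mu>\<in>#eigenvalues_mset X. cmod (\<mu> - c)) = 2 * (real n - real m)"
    if "map_mat complex_of_real X = c \<cdot>\<^sub>m 1\<^sub>m n + s \<cdot>\<^sub>m ?A" and "cmod s = 1" for X c s
    using energy_complete_multipartite_mat[OF parts_g \<open>m \<le> n\<close>] that
    by (simp add: eigenvalues_mset_def proots_char_poly_affine[OF A] multiset.map_comp comp_def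
        norm_mult)
  have "map_mat complex_of_real (adjacency_matrix V E) = 0 \<cdot>\<^sub>m 1\<^sub>m n + 1 \<cdot>\<^sub>m ?A"
    by (rule eq_matI) (auto simp: adjacency_matrix_def complete_multipartite_mat_def
        n_def[symmetric] g_def adj eV)
  from spectrum[OF this] show "graph_energy V E = 2 * (real (card V) - real m)"
    by (simp add: graph_energy_def n_def)
  have "map_mat complex_of_real (laplacian_matrix V E) = of_real (avg_degree V E) \<cdot>\<^sub>m 1\<^sub>m n + (-1) \<cdot>\<^sub>m ?A"
    by (rule eq_matI) (auto simp: laplacian_matrix_def degree_matrix_def adjacency_matrix_def
        complete_multipartite_mat_def n_def[symmetric] g_def adj eV deg avg \<open>m \<le> n\<close> of_nat_diff)
  from spectrum[OF this] show "laplacian_energy V E = 2 * (real (card V) - real m)"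
    by (simp add: laplacian_energy_def n_def)
  have "map_mat complex_of_real (signless_laplacian_matrix V E) = of_real (avg_degree V E) \<cdot>\<^sub>m 1\<^sub>m n + 1 \<cdot>\<^sub>m ?A"
    by (rule eq_matI) (auto simp: signless_laplacian_matrix_def degree_matrix_def adjacency_matrix_def
        complete_multipartite_mat_def n_def[symmetric] g_def adj eV deg avg \<open>m \<le> n\<close> of_nat_diff)
  from spectrum[OF this] show "signless_laplacian_energy V E = 2 * (real (card V) - real m)"
    by (simp add: signless_laplacian_energy_def n_def)
qed

lemma not_hyperenergetic_complete_multipartite:
  fixes V :: "'v set" and f :: "'v \<Rightarrow> 'c"
  assumes "finite V" and "V \<noteq> {}"
    and parts: "\<forall>v\<in>V. card {w \<in> V. f w = f v} = m"
    and adj: "\<forall>v\<in>V. \<forall>w\<in>V. E v w \<longleftrightarrow> f v \<noteq> f w"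
  shows "\<not> hyperenergetic V E \<and> \<not> L_hyperenergetic V E \<and> \<not> Q_hyperenergetic V E"
proof -
  obtain v where "v \<in> V" using \<open>V \<noteq> {}\<close> by blast
  then have "m \<ge> 1"
    using parts \<open>finite V\<close> by (metis (mono_tags, lifting) One_nat_def Suc_leI card_gt_0_iff empty_iff
        finite_subset mem_Collect_eq subsetI)
  then show ?thesis
    using energies_complete_multipartite[OF assms]
    by (simp add: hyperenergetic_def L_hyperenergetic_def Q_hyperenergetic_def)
qed

section \<open>Centralizers in groups with central quotient of order p^2\<close>

lemma comm_group_DirProd:
  assumes "comm_group G" and "comm_group H"
  shows "comm_group (G \<times>\<times> H)"
proof (rule group.group_comm_groupI)
  show "group (G \<times>\<times> H)"
    using assms by (simp add: DirProd_group comm_group.axioms(2))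
qed (use assms in \<open>auto simp: comm_monoid.m_comm[OF comm_group.axioms(1)]\<close>)

lemma grp_center_subset_carrier: "grp_center G \<subseteq> carrier G"
  by (auto simp: grp_center_def)

definition centralizer :: "('a, 'b) monoid_scheme \<Rightarrow> 'a set \<Rightarrow> 'a set" where
  "centralizer G S = {g \<in> carrier G. \<forall>x \<in> S. x \<otimes>\<^bsub>G\<^esub> g = g \<otimes>\<^bsub>G\<^esub> x}"

context group
begin

lemma centralizer_subgroup:
  assumes "S \<subseteq> carrier G"
  shows "subgroup (centralizer G S) G"
proof (rule subgroupI)
  fix g h assume g: "g \<in> centralizer G S" and h: "h \<in> centralizer G S"
  show "inv g \<in> centralizer G S"
  proof -
    have "x \<otimes> inv g = inv g \<otimes> x" if "x \<in> S" for x
      using g that assms by (auto simp: centralizer_def inv_solve_left inv_solve_right m_assoc[symmetric])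
    then show ?thesis using g by (simp add: centralizer_def)
  qed
  show "g \<otimes> h \<in> centralizer G S"
  proof -
    have "x \<otimes> (g \<otimes> h) = g \<otimes> h \<otimes> x" if "x \<in> S" for x
    proof -
      have "x \<otimes> (g \<otimes> h) = g \<otimes> x \<otimes> h"
        using g h that assms by (auto simp: centralizer_def m_assoc[symmetric])
      also have "\<dots> = g \<otimes> h \<otimes> x"
        using g h that assms by (auto simp: centralizer_def m_assoc)
      finally show ?thesis .
    qed
    then show ?thesis using g h by (simp add: centralizer_def)
  qed
qed (use assms in \<open>auto simp: centralizer_def intro!: exI[where x = \<one>]\<close>)

lemma grp_center_eq_centralizer: "grp_center G = centralizer G (carrier G)"
  by (auto simp: grp_center_def centralizer_def)

lemma grp_center_normal: "grp_center G \<lhd> G"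
  unfolding normal_inv_iff
proof
  show "subgroup (grp_center G) G"
    by (simp add: grp_center_eq_centralizer centralizer_subgroup)
  show "\<forall>x\<in>carrier G. \<forall>h\<in>grp_center G. x \<otimes> h \<otimes> inv x \<in> grp_center G"
  proof (intro ballI)
    fix x h assume x: "x \<in> carrier G" and h: "h \<in> grp_center G"
    then have "x \<otimes> h \<otimes> inv x = h \<otimes> x \<otimes> inv x"
      by (simp add: grp_center_def)
    also have "\<dots> = h"
      using x h grp_center_subset_carrier[of G] by (simp add: m_assoc subset_iff)
    finally show "x \<otimes> h \<otimes> inv x \<in> grp_center G"
      using h by simp
  qed
qed

lemma card_conj_class_mult_card_centralizer:
  assumes x: "x \<in> carrier G"
  shows "card (conj_class G x) * card (centralizer G {x}) = card (carrier G)"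
proof -
  let ?conj = "\<lambda>g. \<lambda>h \<in> carrier G. g \<otimes> h \<otimes> inv g"
  have "conj_class G x = orbit G ?conj x"
    using x by (auto simp: conj_class_def orbit_def)
  moreover have "centralizer G {x} = stabilizer G ?conj x"
    using x by (auto simp: centralizer_def stabilizer_def inv_solve_right' intro!: Collect_cong)
  ultimately show ?thesis
    using group_action.orbit_stabilizer_theorem[OF action_by_conjugation x]
    by (simp add: Coset.order_def)
qed

lemma card_subgroup_dvd_card_subgroup:
  assumes "finite (carrier G)" and "subgroup H G" and "subgroup K G" and "H \<subseteq> K"
  shows "card H dvd card K"
proof -
  interpret K: group "G\<lparr>carrier := K\<rparr>"
    using \<open>subgroup K G\<close> by (rule subgroup.subgroup_is_group) (rule is_group)
  have "subgroup H (G\<lparr>carrier := K\<rparr>)"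
    using assms by (intro subgroup_incl)
  from K.lagrange[OF this] have "card (rcosets\<^bsub>G\<lparr>carrier := K\<rparr>\<^esub> H) * card H = card K"
    by (simp add: Coset.order_def)
  then show ?thesis by (metis dvd_triv_right)
qed

lemma card_intermediate_subgroup_prime_square_index:
  assumes "finite (carrier G)" and "prime p" and "card (carrier G) = p^2 * card H"
    and "subgroup H G" and "subgroup K G" and "H \<subset> K" and "K \<subset> carrier G"
  shows "card K = p * card H"
proof -
  have "card H dvd card K"
    using assms by (intro card_subgroup_dvd_card_subgroup) auto
  then obtain a where a: "card K = card H * a" by blast
  have "card K dvd card (carrier G)"
    using assms by (metis card_subgroup_dvd_card_subgroup subgroup_self psubset_imp_subset)
  then obtain b where b: "card (carrier G) = card K * b" by blast
  have "card H > 0"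
    using assms by (metis card_gt_0_iff finite_subset subgroup.one_closed subgroup.subset empty_iff)
  then have "a * b = p^2"
    using assms(3) a b by (simp add: mult.assoc)
  then have "a dvd p^2" by (metis dvd_triv_left)
  then obtain i where "i \<le> 2" and i: "a = p ^ i"
    using \<open>prime p\<close> by (auto simp: divides_primepow_nat)
  have "card H < card K"
    using assms by (meson finite_subset psubset_card_mono psubset_imp_subset)
  then have "i \<noteq> 0" using a i by (cases i) auto
  have "card K < card (carrier G)"
    using assms(1,7) by (rule psubset_card_mono)
  then have "i \<noteq> 2" using a i assms(3) by (auto simp: mult.commute)
  with \<open>i \<le> 2\<close> \<open>i \<noteq> 0\<close> have "i = 1" by linarith
  then show ?thesis using a i by simp
qed

lemma conj_class_self:
  assumes "x \<in> carrier G"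
  shows "x \<in> conj_class G x"
proof -
  have "x = \<one> \<otimes> x \<otimes> inv \<one>"
    using assms by simp
  then show ?thesis
    unfolding conj_class_def using one_closed by (intro CollectI exI[where x = \<one>]) simp
qed

lemma conj_class_subset_if_mem:
  assumes x: "x \<in> carrier G" and w: "w \<in> conj_class G x"
  shows "conj_class G w \<subseteq> conj_class G x"
proof
  obtain g where g: "g \<in> carrier G" and w_eq: "w = g \<otimes> x \<otimes> inv g"
    using w by (auto simp: conj_class_def)
  fix u assume "u \<in> conj_class G w"
  then obtain h where h: "h \<in> carrier G" and "u = h \<otimes> w \<otimes> inv h"
    by (auto simp: conj_class_def)
  then have "u = (h \<otimes> g) \<otimes> x \<otimes> inv (h \<otimes> g)"
    using x g by (simp add: w_eq m_assoc inv_mult_group)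
  then show "u \<in> conj_class G x"
    using h g by (auto simp: conj_class_def)
qed

lemma conj_class_eq_if_mem:
  assumes x: "x \<in> carrier G" and w: "w \<in> conj_class G x"
  shows "conj_class G w = conj_class G x"
proof
  obtain g where g: "g \<in> carrier G" and w_eq: "w = g \<otimes> x \<otimes> inv g"
    using w by (auto simp: conj_class_def)
  then have "x = inv g \<otimes> w \<otimes> inv (inv g)"
    using x by (simp add: m_assoc inv_solve_left)
  then have "x \<in> conj_class G w"
    unfolding conj_class_def using g inv_closed by blast
  then show "conj_class G x \<subseteq> conj_class G w"
    using x g w_eq by (intro conj_class_subset_if_mem) auto
qed (rule conj_class_subset_if_mem[OF assms])

lemma finite_nccc_vertices:
  assumes "finite (carrier G)"
  shows "finite (nccc_vertices G)"
proof -
  have "nccc_vertices G \<subseteq> Pow (carrier G)"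
    by (auto simp: nccc_vertices_def conj_class_def)
  then show ?thesis
    using assms by (simp add: finite_subset)
qed

lemma nccc_vertices_nonempty:
  assumes "\<not> comm_group G"
  shows "nccc_vertices G \<noteq> {}"
proof
  assume "nccc_vertices G = {}"
  then have "carrier G \<subseteq> grp_center G"
    by (auto simp: nccc_vertices_def)
  then have "comm_group G"
    by (intro group_comm_groupI) (auto simp: grp_center_def)
  with assms show False by contradiction
qed

end

locale central_quotient_prime_square = group G for G (structure) +
  fixes p :: nat
  assumes finite_carrier: "finite (carrier G)"
    and prime: "prime p"
    and card_carrier: "card (carrier G) = p^2 * card (grp_center G)"
    and comm_quotient: "comm_group (G Mod grp_center G)"

lemma (in group) central_quotient_prime_squareI:
  assumes "finite (carrier G)" and "prime p"
    and iso: "G Mod grp_center G \<cong> integer_mod_group p \<times>\<times> integer_mod_group p"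
  shows "central_quotient_prime_square G p"
proof (intro central_quotient_prime_square.intro central_quotient_prime_square_axioms.intro)
  let ?Z = "grp_center G" and ?H = "integer_mod_group p \<times>\<times> integer_mod_group p"
  have quotient: "group (G Mod ?Z)"
    using grp_center_normal by (rule normal.factorgroup_is_group)
  have "card (rcosets ?Z) = card (carrier ?H)"
    using iso_same_card[OF iso] by (simp add: FactGroup_def)
  also have "\<dots> = p^2"
    using prime_gt_0_nat[OF \<open>prime p\<close>]
    by (simp add: carrier_integer_mod_group card_cartesian_product power2_eq_square)
  finally show "card (carrier G) = p^2 * card ?Z"
    using lagrange[OF normal_imp_subgroup[OF grp_center_normal]] by (simp add: Coset.order_def)
  have "comm_group ?H"
    by (simp add: comm_group_DirProd)
  then show "comm_group (G Mod ?Z)"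
    using group.iso_sym[OF quotient iso] quotient
    by (simp add: comm_group.iso_imp_comm_group group.is_monoid)
qed (use assms is_group in auto)

context central_quotient_prime_square
begin

lemma grp_center_subgroup: "subgroup (grp_center G) G"
  by (rule normal_imp_subgroup[OF grp_center_normal])

lemma card_centralizer_commuting_noncentral:
  assumes S: "S \<subseteq> carrier G" and comm: "\<forall>x\<in>S. \<forall>y\<in>S. x \<otimes> y = y \<otimes> x"
    and noncentral: "\<not> S \<subseteq> grp_center G"
  shows "card (centralizer G S) = p * card (grp_center G)"
proof (rule card_intermediate_subgroup_prime_square_index
    [OF finite_carrier prime card_carrier grp_center_subgroup centralizer_subgroup[OF S]])
  obtain x where x: "x \<in> S" "x \<notin> grp_center G"
    using noncentral by blast
  then have "x \<in> centralizer G S"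
    using S comm by (auto simp: centralizer_def)
  moreover have "grp_center G \<subseteq> centralizer G S"
    using S by (auto simp: grp_center_def centralizer_def)
  ultimately show "grp_center G \<subset> centralizer G S"
    using x by blast
  obtain g where "g \<in> carrier G" "x \<otimes> g \<noteq> g \<otimes> x"
    using x S by (auto simp: grp_center_def)
  then have "g \<notin> centralizer G S"
    using x by (auto simp: centralizer_def)
  then show "centralizer G S \<subset> carrier G"
    using \<open>g \<in> carrier G\<close> by (auto simp: centralizer_def)
qed

lemma centralizer_eq_if_commute:
  assumes x: "x \<in> carrier G - grp_center G" and y: "y \<in> carrier G - grp_center G"
    and xy: "x \<otimes> y = y \<otimes> x"
  shows "centralizer G {x} = centralizer G {y}"
proof -
  have finite: "finite (centralizer G S)" for S
    using finite_carrier by (rule rev_finite_subset) (auto simp: centralizer_def)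
  have card_pair: "card (centralizer G {x, y}) = p * card (grp_center G)"
    using x y xy by (intro card_centralizer_commuting_noncentral) auto
  have "centralizer G {x, y} = centralizer G {z}" if "z \<in> {x, y}" for z
  proof (rule card_subset_eq[OF finite])
    show "centralizer G {x, y} \<subseteq> centralizer G {z}"
      using that by (auto simp: centralizer_def)
    show "card (centralizer G {x, y}) = card (centralizer G {z})"
      using card_pair that x y by (auto simp: card_centralizer_commuting_noncentral)
  qed
  then show ?thesis by auto
qed

lemma conj_class_mem_center_coset:
  assumes x: "x \<in> carrier G" and y: "y \<in> conj_class G x"
  obtains z where "z \<in> grp_center G" and "y = x \<otimes> z"
proof -
  let ?Z = "grp_center G"
  obtain g where g: "g \<in> carrier G" and y_eq: "y = g \<otimes> x \<otimes> inv g"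
    using y by (auto simp: conj_class_def)
  have "?Z #> g \<in> rcosets ?Z" and "?Z #> x \<in> rcosets ?Z"
    using x g grp_center_subset_carrier[of G] by (auto intro: rcosetsI)
  then have "(?Z #> g) <#> (?Z #> x) = (?Z #> x) <#> (?Z #> g)"
    using comm_monoid.m_comm[OF comm_group.axioms(1)[OF comm_quotient]] by (simp add: FactGroup_def)
  then have "?Z #> (g \<otimes> x) = ?Z #> (x \<otimes> g)"
    using x g by (simp add: normal.rcos_sum[OF grp_center_normal])
  moreover have "g \<otimes> x \<in> ?Z #> (g \<otimes> x)"
    using x g by (intro rcos_self grp_center_subgroup) auto
  ultimately obtain z where z: "z \<in> ?Z" and gx: "g \<otimes> x = z \<otimes> (x \<otimes> g)"
    by (auto simp: r_coset_def)
  have "z \<in> carrier G"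
    using z grp_center_subset_carrier[of G] by blast
  then have "y = z \<otimes> x"
    using x g by (simp add: y_eq gx m_assoc)
  also have "\<dots> = x \<otimes> z"
    using x z by (simp add: grp_center_def)
  finally show ?thesis
    using that z by blast
qed

lemma conj_class_noncentral:
  assumes x: "x \<in> carrier G - grp_center G" and y: "y \<in> conj_class G x"
  shows "y \<in> carrier G - grp_center G" and "centralizer G {y} = centralizer G {x}"
proof -
  obtain z where z: "z \<in> grp_center G" and y_eq: "y = x \<otimes> z"
    using conj_class_mem_center_coset x y by blast
  have zc: "z \<in> carrier G"
    using z grp_center_subset_carrier[of G] by blast
  have "y \<notin> grp_center G"
  proof
    assume "y \<in> grp_center G"
    then have "y \<otimes> inv z \<in> grp_center G"
      using z grp_center_subgroup by (simp add: subgroup.m_closed subgroup.m_inv_closed)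
    moreover have "y \<otimes> inv z = x"
      using x zc by (simp add: y_eq m_assoc)
    ultimately show False using x by simp
  qed
  then show y_nc: "y \<in> carrier G - grp_center G"
    using x zc by (simp add: y_eq)
  have "x \<otimes> y = y \<otimes> x"
    using x z zc by (simp add: y_eq grp_center_def m_assoc)
  then show "centralizer G {y} = centralizer G {x}"
    using centralizer_eq_if_commute[OF x y_nc] by simp
qed

lemma card_conj_class_noncentral:
  assumes "x \<in> carrier G - grp_center G"
  shows "card (conj_class G x) = p"
proof -
  have "card (centralizer G {x}) = p * card (grp_center G)"
    using assms by (intro card_centralizer_commuting_noncentral) auto
  then have "card (conj_class G x) * (p * card (grp_center G)) = card (carrier G)"
    using card_conj_class_mult_card_centralizer[of x] assms by simp
  also have "\<dots> = p * (p * card (grp_center G))"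
    by (simp add: card_carrier power2_eq_square)
  finally have "card (conj_class G x) * (p * card (grp_center G)) = p * (p * card (grp_center G))" .
  moreover have "p * card (grp_center G) > 0"
    using prime_gt_0_nat[OF prime] finite_carrier subgroup.one_closed[OF grp_center_subgroup]
      grp_center_subset_carrier[of G]
    by (metis card_gt_0_iff empty_iff finite_subset nat_0_less_mult_iff)
  ultimately show ?thesis by simp
qed

lemma centralizer_conj_class:
  assumes x: "x \<in> carrier G - grp_center G"
  shows "centralizer G (conj_class G x) = centralizer G {x}"
proof (rule Set.set_eqI, rule iffI)
  fix g assume "g \<in> centralizer G (conj_class G x)"
  then show "g \<in> centralizer G {x}"
    using conj_class_self[of x] x by (simp add: centralizer_def)
next
  fix g assume g: "g \<in> centralizer G {x}"
  have "y \<otimes> g = g \<otimes> y" if "y \<in> conj_class G x" for y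
  proof -
    have "g \<in> centralizer G {y}"
      using conj_class_noncentral(2)[OF x that] g by simp
    then show ?thesis by (simp add: centralizer_def)
  qed
  then show "g \<in> centralizer G (conj_class G x)"
    using g by (simp add: centralizer_def)
qed

lemma nccc_adj_iff_centralizer_neq:
  assumes X: "X \<in> nccc_vertices G" and Y: "Y \<in> nccc_vertices G"
  shows "nccc_adj G X Y \<longleftrightarrow> centralizer G X \<noteq> centralizer G Y"
proof -
  obtain x where x: "x \<in> carrier G - grp_center G" and X_eq: "X = conj_class G x"
    using X by (auto simp: nccc_vertices_def)
  obtain y where y: "y \<in> carrier G - grp_center G" and Y_eq: "Y = conj_class G y"
    using Y by (auto simp: nccc_vertices_def)
  have CX: "centralizer G X = centralizer G {x}" and CY: "centralizer G Y = centralizer G {y}"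
    using centralizer_conj_class x y X_eq Y_eq by auto
  show ?thesis
  proof
    assume adj: "nccc_adj G X Y"
    show "centralizer G X \<noteq> centralizer G Y"
    proof
      assume "centralizer G X = centralizer G Y"
      then have "y \<in> centralizer G {x}"
        using CX CY y by (simp add: centralizer_def)
      then have "x \<otimes> y = y \<otimes> x"
        by (simp add: centralizer_def)
      moreover have "x \<in> X" "y \<in> Y"
        using x y X_eq Y_eq conj_class_self by auto
      ultimately show False
        using adj by (auto simp: nccc_adj_def)
    qed
  next
    assume neq: "centralizer G X \<noteq> centralizer G Y"
    have "x' \<otimes> y' \<noteq> y' \<otimes> x'" if "x' \<in> X" "y' \<in> Y" for x' y'
    proof
      assume "x' \<otimes> y' = y' \<otimes> x'"
      moreover have "x' \<in> carrier G - grp_center G" "centralizer G {x'} = centralizer G {x}"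
        using conj_class_noncentral[OF x] that X_eq by auto
      moreover have "y' \<in> carrier G - grp_center G" "centralizer G {y'} = centralizer G {y}"
        using conj_class_noncentral[OF y] that Y_eq by auto
      ultimately show False
        using neq centralizer_eq_if_commute CX CY by metis
    qed
    then show "nccc_adj G X Y"
      using X Y neq by (auto simp: nccc_adj_def)
  qed
qed

lemma centralizer_mem_centralizer_noncentral:
  assumes x: "x \<in> carrier G - grp_center G" and y: "y \<in> centralizer G {x} - grp_center G"
  shows "y \<in> carrier G - grp_center G" and "centralizer G {y} = centralizer G {x}"
proof -
  show y_nc: "y \<in> carrier G - grp_center G"
    using y by (auto simp: centralizer_def)
  show "centralizer G {y} = centralizer G {x}"
    using centralizer_eq_if_commute[OF x y_nc] y by (auto simp: centralizer_def)
qed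

lemma conj_class_subset_centralizer:
  assumes x: "x \<in> carrier G - grp_center G" and y: "y \<in> centralizer G {x} - grp_center G"
  shows "conj_class G y \<subseteq> centralizer G {x} - grp_center G"
proof
  fix w assume w: "w \<in> conj_class G y"
  note y_nc = centralizer_mem_centralizer_noncentral[OF x y]
  have "w \<in> carrier G - grp_center G" and "centralizer G {w} = centralizer G {x}"
    using conj_class_noncentral[OF y_nc(1) w] y_nc(2) by auto
  then show "w \<in> centralizer G {x} - grp_center G"
    by (auto simp: centralizer_def)
qed

lemma Union_conj_class_centralizer:
  assumes x: "x \<in> carrier G - grp_center G"
  shows "\<Union> (conj_class G ` (centralizer G {x} - grp_center G)) = centralizer G {x} - grp_center G"
proof
  show "\<Union> (conj_class G ` (centralizer G {x} - grp_center G)) \<subseteq> centralizer G {x} - grp_center G"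
    using conj_class_subset_centralizer[OF x] by blast
  show "centralizer G {x} - grp_center G \<subseteq> \<Union> (conj_class G ` (centralizer G {x} - grp_center G))"
    using conj_class_self by (force simp: centralizer_def)
qed

lemma nccc_part_eq_image:
  assumes x: "x \<in> carrier G - grp_center G"
  shows "{Y \<in> nccc_vertices G. centralizer G Y = centralizer G {x}}
    = conj_class G ` (centralizer G {x} - grp_center G)"
proof
  show "{Y \<in> nccc_vertices G. centralizer G Y = centralizer G {x}}
      \<subseteq> conj_class G ` (centralizer G {x} - grp_center G)"
  proof
    fix Y assume "Y \<in> {Y \<in> nccc_vertices G. centralizer G Y = centralizer G {x}}"
    then obtain y where y: "y \<in> carrier G - grp_center G" and Y_eq: "Y = conj_class G y"
      and "centralizer G Y = centralizer G {x}"
      by (auto simp: nccc_vertices_def)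
    then have "y \<in> centralizer G {x}"
      using centralizer_conj_class[OF y] by (auto simp: centralizer_def)
    then show "Y \<in> conj_class G ` (centralizer G {x} - grp_center G)"
      using y Y_eq by blast
  qed
  show "conj_class G ` (centralizer G {x} - grp_center G)
      \<subseteq> {Y \<in> nccc_vertices G. centralizer G Y = centralizer G {x}}"
  proof (rule image_subsetI)
    fix y assume y: "y \<in> centralizer G {x} - grp_center G"
    then show "conj_class G y \<in> {Y \<in> nccc_vertices G. centralizer G Y = centralizer G {x}}"
      using centralizer_mem_centralizer_noncentral[OF x y] centralizer_conj_class
      by (auto simp: nccc_vertices_def)
  qed
qed

lemma card_centralizer_diff_center:
  assumes x: "x \<in> carrier G - grp_center G"
  shows "card (centralizer G {x} - grp_center G) = (p - 1) * card (grp_center G)"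
proof -
  have "grp_center G \<subseteq> centralizer G {x}"
    using x by (auto simp: centralizer_def grp_center_def)
  moreover have "card (centralizer G {x}) = p * card (grp_center G)"
    using x by (auto intro: card_centralizer_commuting_noncentral)
  moreover have "finite (grp_center G)"
    using finite_carrier grp_center_subset_carrier[of G] by (rule rev_finite_subset)
  ultimately show ?thesis
    by (simp add: card_Diff_subset diff_mult_distrib)
qed

lemma card_nccc_part:
  assumes X: "X \<in> nccc_vertices G"
  shows "p * card {Y \<in> nccc_vertices G. centralizer G Y = centralizer G X}
    = (p - 1) * card (grp_center G)"
proof -
  obtain x where x: "x \<in> carrier G - grp_center G" and X_eq: "X = conj_class G x"
    using X by (auto simp: nccc_vertices_def)
  let ?C = "centralizer G {x} - grp_center G"
  have C_carrier: "?C \<subseteq> carrier G"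
    by (auto simp: centralizer_def)
  have "p * card (conj_class G ` ?C) = card (\<Union> (conj_class G ` ?C))"
  proof (rule card_partition)
    show "finite (conj_class G ` ?C)" and "finite (\<Union> (conj_class G ` ?C))"
      using finite_carrier C_carrier by (auto simp: Union_conj_class_centralizer[OF x] finite_subset)
    show "card c = p" if "c \<in> conj_class G ` ?C" for c
      using that card_conj_class_noncentral C_carrier by auto
    show "c1 \<inter> c2 = {}" if c12: "c1 \<in> conj_class G ` ?C" "c2 \<in> conj_class G ` ?C" and "c1 \<noteq> c2"
      for c1 c2
    proof -
      obtain y1 y2 where "y1 \<in> carrier G" "y2 \<in> carrier G"
        and "c1 = conj_class G y1" "c2 = conj_class G y2"
        using c12 C_carrier by blast
      then show ?thesis
        using \<open>c1 \<noteq> c2\<close> conj_class_eq_if_mem by blast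
    qed
  qed
  have "p * card {Y \<in> nccc_vertices G. centralizer G Y = centralizer G X} = p * card (conj_class G ` ?C)"
    using centralizer_conj_class[OF x] nccc_part_eq_image[OF x] by (simp add: X_eq)
  also have "\<dots> = card (\<Union> (conj_class G ` ?C))" by fact
  also have "\<dots> = card ?C" by (simp only: Union_conj_class_centralizer[OF x])
  also have "\<dots> = (p - 1) * card (grp_center G)" by (rule card_centralizer_diff_center[OF x])
  finally show ?thesis .
qed

end

theorem theorem4p1:
  fixes G :: "('a, 'b) monoid_scheme" and p :: nat
  assumes "group G" and "finite (carrier G)" and "\<not> comm_group G"
    and "prime p"
    and "G Mod (grp_center G) \<cong> (integer_mod_group p \<times>\<times> integer_mod_group p)"
  shows "\<not> hyperenergetic (nccc_vertices G) (nccc_adj G)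
       \<and> \<not> L_hyperenergetic (nccc_vertices G) (nccc_adj G)
       \<and> \<not> Q_hyperenergetic (nccc_vertices G) (nccc_adj G)"
proof -
  interpret group G by fact
  interpret central_quotient_prime_square G p
    using assms(2,4,5) by (rule central_quotient_prime_squareI)
  let ?V = "nccc_vertices G"
  have parts: "\<forall>X\<in>?V. card {Y \<in> ?V. centralizer G Y = centralizer G X}
      = (p - 1) * card (grp_center G) div p"
  proof
    fix X assume "X \<in> ?V"
    from arg_cong[where f = "\<lambda>k. k div p", OF card_nccc_part[OF this]]
    show "card {Y \<in> ?V. centralizer G Y = centralizer G X} = (p - 1) * card (grp_center G) div p"
      using prime_gt_0_nat[OF prime] by simp
  qed
  have "\<forall>X\<in>?V. \<forall>Y\<in>?V. nccc_adj G X Y \<longleftrightarrow> centralizer G X \<noteq> centralizer G Y"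
    by (simp add: nccc_adj_iff_centralizer_neq)
  then show ?thesis
    by (rule not_hyperenergetic_complete_multipartite
        [OF finite_nccc_vertices[OF finite_carrier] nccc_vertices_nonempty[OF assms(3)] parts])
qed

end
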